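(* Let $n\ge 3$ and let $W_n$ be the web graph. Then its $b$-chromatic number satisfies $$\varphi(W_n)=\begin{cases}4 & \text{if } n=3,4,\\ 5 & \text{if } n\ge 5.\end{cases}$$
   Context: The web graph $W_n$ is obtained from the prism graph $C_n\Box P_2$ (two $n$-cycles $v_1\dots v_n$ and $u_1\dots u_n$ with $u_i$ adjacent to $v_i$ for each $i$) by attaching one pendant vertex to each vertex of one of the two cycles (the outer cycle $u_1\dots u_n$). A $b$-colouring of a graph $G$ with $k$ colours is a proper colouring $c:V(G)\to\{1,\dots,k\}$ such that for every colour $i$ there is a vertex of colour $i$ adjacent to a vertex of every colour $j\ne i$, $1\le j\le k$. The $b$-chromatic number $\varphi(G)$ is the maximum $k$ for which $G$ has a $b$-colouring with $k$ colours. *)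

theory Defs
  imports Main
begin

definition proper_colouring :: "'a set \<Rightarrow> ('a \<Rightarrow> 'a \<Rightarrow> bool) \<Rightarrow> nat \<Rightarrow> ('a \<Rightarrow> nat) \<Rightarrow> bool" where
  "proper_colouring V E k c \<longleftrightarrow>
     (\<forall>x\<in>V. c x \<in> {1..k}) \<and> (\<forall>x\<in>V. \<forall>y\<in>V. E x y \<longrightarrow> c x \<noteq> c y)"

definition b_colouring :: "'a set \<Rightarrow> ('a \<Rightarrow> 'a \<Rightarrow> bool) \<Rightarrow> nat \<Rightarrow> ('a \<Rightarrow> nat) \<Rightarrow> bool" where
  "b_colouring V E k c \<longleftrightarrow> proper_colouring V E k c \<and>
     (\<forall>i\<in>{1..k}. \<exists>x\<in>V. c x = i \<and>
        (\<forall>j\<in>{1..k}. j \<noteq> i \<longrightarrow> (\<exists>y\<in>V. E x y \<and> c y = j)))"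

definition b_chromatic_number :: "'a set \<Rightarrow> ('a \<Rightarrow> 'a \<Rightarrow> bool) \<Rightarrow> nat" where
  "b_chromatic_number V E = (GREATEST k. \<exists>c. b_colouring V E k c)"

(* Web graph W_n. Vertices (l, i) with i < n:
   l = 0 : inner cycle v_{i+1};  l = 1 : outer cycle u_{i+1};  l = 2 : pendant vertex at u_{i+1}. *)
definition web_vertices :: "nat \<Rightarrow> (nat \<times> nat) set" where
  "web_vertices n = {0,1,2} \<times> {..<n}"

definition web_adj :: "nat \<Rightarrow> nat \<times> nat \<Rightarrow> nat \<times> nat \<Rightarrow> bool" where
  "web_adj n x y \<longleftrightarrow> x \<in> web_vertices n \<and> y \<in> web_vertices n \<and>
     ((fst x = fst y \<and> fst x \<in> {0,1} \<and>
        (snd y = Suc (snd x) mod n \<or> snd x = Suc (snd y) mod n))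
    \<or> (snd x = snd y \<and> {fst x, fst y} = {0,1})
    \<or> (snd x = snd y \<and> {fst x, fst y} = {1,2}))"

end

theory Submission
  imports Defs
begin

text \<open>
  The b-vertex of colour \<open>i\<close> sees all other \<open>k - 1\<close> colours, so it has degree at least
  \<open>k - 1\<close>; b-vertices of distinct colours are distinct. In \<open>W\<^sub>n\<close> the outer vertices
  have degree 4 and all others degree at most 3, so \<open>k \<le> 5\<close>, and \<open>k = 5\<close> needs five
  distinct outer vertices, i.e. \<open>n \<ge> 5\<close>. Conversely, explicit colourings attain 4 for
  \<open>n = 3, 4\<close> and 5 for \<open>n \<ge> 5\<close>.
\<close>

definition neighbours :: "'a set \<Rightarrow> ('a \<Rightarrow> 'a \<Rightarrow> bool) \<Rightarrow> 'a \<Rightarrow> 'a set" where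
  "neighbours V E x = {y \<in> V. E x y}"

lemma b_colouring_iff:
  "b_colouring V E k c \<longleftrightarrow> proper_colouring V E k c \<and>
     (\<forall>i\<in>{1..k}. \<exists>x\<in>V. c x = i \<and> {1..k} - {i} \<subseteq> c ` neighbours V E x)"
proof -
  have "(\<forall>j\<in>{1..k}. j \<noteq> i \<longrightarrow> (\<exists>y\<in>V. E x y \<and> c y = j)) \<longleftrightarrow> {1..k} - {i} \<subseteq> c ` neighbours V E x"
    for i x by (auto simp: neighbours_def)
  then show ?thesis unfolding b_colouring_def by presburger
qed

lemma b_colouring_le_card_high_degree:
  assumes "finite V" and "b_colouring V E k c"
  shows "k \<le> card {x \<in> V. k - 1 \<le> card (neighbours V E x)}"
    (is "k \<le> card ?H")
proof -
  have b_vertices: "\<forall>i\<in>{1..k}. \<exists>x\<in>V. c x = i \<and> {1..k} - {i} \<subseteq> c ` neighbours V E x"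
    using assms(2) unfolding b_colouring_iff by (rule conjunct2)
  have "\<forall>i\<in>{1..k}. \<exists>x\<in>?H. c x = i"
  proof
    fix i assume i: "i \<in> {1..k}"
    then obtain x where x: "x \<in> V" "c x = i" and dom: "{1..k} - {i} \<subseteq> c ` neighbours V E x"
      using b_vertices by blast
    have fin: "finite (neighbours V E x)" using assms(1) by (simp add: neighbours_def)
    have "k - 1 = card ({1..k} - {i})" using i by simp
    also have "\<dots> \<le> card (c ` neighbours V E x)" using dom fin by (intro card_mono) auto
    also have "\<dots> \<le> card (neighbours V E x)" using fin by (rule card_image_le)
    finally show "\<exists>x\<in>?H. c x = i" using x by blast
  qed
  then obtain b where b: "\<forall>i\<in>{1..k}. b i \<in> ?H \<and> c (b i) = i"
    by (auto dest: bchoice)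
  then have "inj_on b {1..k}" by (intro inj_onI) metis
  moreover have "b ` {1..k} \<subseteq> ?H" using b by blast
  ultimately have "card {1..k} \<le> card ?H" using assms(1) by (intro card_inj_on_le) auto
  then show ?thesis by simp
qed

definition web_neighbours :: "nat \<Rightarrow> nat \<times> nat \<Rightarrow> (nat \<times> nat) set" where
  "web_neighbours n = (\<lambda>(l, i).
     if l \<le> 1 then {(l, if Suc i = n then 0 else Suc i), (l, if i = 0 then n - 1 else i - 1)} \<union>
       (if l = 0 then {(1, i)} else {(0, i), (2, i)})
     else {(1, i)})"

lemma cycle_adjacent_iff:
  fixes i j n :: nat
  assumes "i < n" "j < n"
  shows "(j = Suc i mod n \<or> i = Suc j mod n) \<longleftrightarrow>
    j = (if Suc i = n then 0 else Suc i) \<or> j = (if i = 0 then n - 1 else i - 1)"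
  using assms by (cases "Suc i = n"; cases "Suc j = n") auto

lemma web_neighbours_subset: "x \<in> web_vertices n \<Longrightarrow> web_neighbours n x \<subseteq> web_vertices n"
  by (cases x) (auto simp: web_neighbours_def web_vertices_def less_imp_diff_less split: if_splits)

lemma web_adj_iff: "web_adj n x y \<longleftrightarrow> x \<in> web_vertices n \<and> y \<in> web_neighbours n x"
proof (cases "x \<in> web_vertices n \<and> y \<in> web_vertices n")
  case True
  obtain l i l' j where xy: "x = (l, i)" "y = (l', j)" by (cases x, cases y)
  with True have i: "i < n" and j: "j < n"
    and l: "l = 0 \<or> l = 1 \<or> l = 2" and l': "l' = 0 \<or> l' = 1 \<or> l' = 2"
    by (auto simp: web_vertices_def)
  show ?thesis using l l' True unfolding xy
    by (elim disjE) (auto simp: web_adj_def web_neighbours_def doubleton_eq_iff cycle_adjacent_iff[OF i j])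
next
  case False
  then show ?thesis unfolding web_adj_def using web_neighbours_subset[of x n] by blast
qed

lemma neighbours_web:
  "x \<in> web_vertices n \<Longrightarrow> neighbours (web_vertices n) (web_adj n) x = web_neighbours n x"
  unfolding neighbours_def web_adj_iff using web_neighbours_subset by blast

lemma card_web_neighbours: "card (web_neighbours n (l, i)) \<le> (if l = 1 then 4 else 3)"
  by (auto simp: web_neighbours_def intro!: card_insert_le_m1)

lemma web_proper_colouringI:
  assumes range: "\<And>x. x \<in> web_vertices n \<Longrightarrow> c x \<in> {1..k}"
    and ring: "\<And>l i. l \<le> 1 \<Longrightarrow> Suc i < n \<Longrightarrow> c (l, i) \<noteq> c (l, Suc i)"
    and wrap: "\<And>l. l \<le> 1 \<Longrightarrow> c (l, n - 1) \<noteq> c (l, 0)"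
    and rungs: "\<And>i. i < n \<Longrightarrow> c (0, i) \<noteq> c (1, i) \<and> c (1, i) \<noteq> c (2, i)"
  shows "proper_colouring (web_vertices n) (web_adj n) k c"
proof -
  have "c (l, i) \<noteq> c y" if "(l, i) \<in> web_vertices n" "y \<in> web_neighbours n (l, i)" for l i y
  proof -
    have "i < n" "l = 0 \<or> l = 1 \<or> l = 2" using that(1) by (auto simp: web_vertices_def)
    then show ?thesis using that(2) ring[of l i] ring[of l "i - 1"] wrap[of l] rungs[OF \<open>i < n\<close>]
      by (cases "Suc i = n"; cases "i = 0") (auto simp: web_neighbours_def)
  qed
  with range show ?thesis unfolding proper_colouring_def web_adj_iff by fast
qed

text \<open>
  For \<open>n \<ge> 6\<close>: the outer vertices \<open>u\<^sub>0, \<dots>, u\<^sub>4\<close> get colours 1--5 and are the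
  b-vertices; beyond them the outer cycle alternates 3, 4 and the inner cycle 1, 2.
  The pendant of \<open>u\<^sub>0\<close> takes the one of 3, 4 that is missing at \<open>u\<^sub>n\<^sub>-\<^sub>1\<close>.
\<close>
definition web_colouring :: "nat \<Rightarrow> nat \<times> nat \<Rightarrow> nat" where
  "web_colouring n = (\<lambda>(l, i).
     if l = 0 then (if i = 1 then 4 else if i < 3 then 5 else if even i then 2 else 1)
     else if l = 1 then (if i < 5 then i + 1 else if even i then 4 else 3)
     else if i = 0 then (if even n then 4 else 3) else if i = 1 then 5 else if i = 3 then 2 else 1)"

lemma web_colouring_proper:
  assumes "6 \<le> n"
  shows "proper_colouring (web_vertices n) (web_adj n) 5 (web_colouring n)"
proof (rule web_proper_colouringI)
  fix x
  show "web_colouring n x \<in> {1..5}" by (auto simp: web_colouring_def split: prod.splits)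
next
  fix l i :: nat assume "l \<le> 1"
  then have "l = 0 \<or> l = 1" by auto
  moreover have "i < 5 \<Longrightarrow> i = 0 \<or> i = 1 \<or> i = 2 \<or> i = 3 \<or> i = 4" by auto
  ultimately show "web_colouring n (l, i) \<noteq> web_colouring n (l, Suc i)"
    by (cases "i < 5") (auto simp: web_colouring_def)
next
  fix l :: nat assume "l \<le> 1"
  then have "l = 0 \<or> l = 1" by auto
  then show "web_colouring n (l, n - 1) \<noteq> web_colouring n (l, 0)"
    using assms by (auto simp: web_colouring_def)
next
  fix i :: nat
  have "i < 5 \<Longrightarrow> i = 0 \<or> i = 1 \<or> i = 2 \<or> i = 3 \<or> i = 4" by auto
  then show "web_colouring n (0, i) \<noteq> web_colouring n (1, i) \<and> web_colouring n (1, i) \<noteq> web_colouring n (2, i)"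
    by (cases "i < 5") (auto simp: web_colouring_def)
qed

lemma web_colouring_b_colouring:
  assumes "6 \<le> n"
  shows "b_colouring (web_vertices n) (web_adj n) 5 (web_colouring n)"
  unfolding b_colouring_iff
proof (intro conjI web_colouring_proper[OF assms] ballI)
  fix k :: nat assume "k \<in> {1..5}"
  then have k: "k = 1 \<or> k = 2 \<or> k = 3 \<or> k = 4 \<or> k = 5" by auto
  have x: "(1, k - 1) \<in> web_vertices n" using k assms by (auto simp: web_vertices_def)
  have "even (n - 1) \<longleftrightarrow> odd n" using assms by simp
  then have "web_colouring n (1, k - 1) = k \<and>
      {1..5} - {k} \<subseteq> web_colouring n ` web_neighbours n (1, k - 1)"
    using k assms by (elim disjE) (auto simp: web_colouring_def web_neighbours_def)
  then show "\<exists>x\<in>web_vertices n. web_colouring n x = k \<and>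
      {1..5} - {k} \<subseteq> web_colouring n ` neighbours (web_vertices n) (web_adj n) x"
    using x neighbours_web[OF x] by metis
qed

definition table_colouring :: "nat list list \<Rightarrow> nat \<times> nat \<Rightarrow> nat" where
  "table_colouring rows x = rows ! fst x ! snd x"

lemma web_vertices_upt: "web_vertices n = {0, 1, 2} \<times> set [0..<n]"
  by (auto simp: web_vertices_def)

lemma small_web_b_colourings:
  "b_colouring (web_vertices 3) (web_adj 3) 4 (table_colouring [[4,3,2], [1,2,3], [2,4,4]])"
  "b_colouring (web_vertices 4) (web_adj 4) 4 (table_colouring [[2,1,4,3], [1,2,3,4], [3,4,1,2]])"
  "b_colouring (web_vertices 5) (web_adj 5) 5 (table_colouring [[3,4,5,1,2], [1,2,3,4,5], [4,5,1,2,3]])"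
  unfolding b_colouring_def proper_colouring_def web_adj_def web_vertices_upt atLeastAtMost_upt
  by (simp_all add: table_colouring_def doubleton_eq_iff upt_rec del: set_upt)

lemma web_b_colouring_bounds:
  assumes "b_colouring (web_vertices n) (web_adj n) k c"
  shows "k \<le> 5" and "n \<le> 4 \<Longrightarrow> k \<le> 4"
proof -
  let ?N = "neighbours (web_vertices n) (web_adj n)"
  let ?H = "{x \<in> web_vertices n. k - 1 \<le> card (?N x)}"
  have deg: "card (?N (l, i)) \<le> (if l = 1 then 4 else 3)" if "(l, i) \<in> web_vertices n" for l i
    using card_web_neighbours[of n l i] unfolding neighbours_web[OF that] .
  have "finite (web_vertices n)" by (simp add: web_vertices_def)
  then have k: "k \<le> card ?H" using assms by (rule b_colouring_le_card_high_degree)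
  have outer: "?H \<subseteq> {1} \<times> {..<n}" if "5 \<le> k"
  proof
    fix x assume "x \<in> ?H"
    moreover obtain l i where "x = (l, i)" by (cases x)
    ultimately have "(l, i) \<in> web_vertices n" "4 \<le> card (?N (l, i))" using that by auto
    with deg[of l i] show "x \<in> {1} \<times> {..<n}"
      using \<open>x = (l, i)\<close> by (auto simp: web_vertices_def split: if_split_asm)
  qed
  show "k \<le> 5"
  proof (rule ccontr)
    assume "\<not> k \<le> 5"
    have "?H = {}"
    proof (intro equals0I)
      fix x assume "x \<in> ?H"
      moreover obtain l i where "x = (l, i)" by (cases x)
      ultimately have "(l, i) \<in> web_vertices n" "5 \<le> card (?N (l, i))" using \<open>\<not> k \<le> 5\<close> by auto
      with deg[of l i] show False by (simp split: if_split_asm)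
    qed
    with k \<open>\<not> k \<le> 5\<close> show False by (simp only: card.empty)
  qed
  show "k \<le> 4" if "n \<le> 4"
  proof (rule ccontr)
    assume "\<not> k \<le> 4"
    with outer have "card ?H \<le> card ({1::nat} \<times> {..<n})" by (intro card_mono) auto
    with k \<open>\<not> k \<le> 4\<close> \<open>n \<le> 4\<close> show False by (simp add: card_cartesian_product)
  qed
qed

theorem theorem2p19:
  fixes n :: nat
  assumes "n \<ge> 3"
  shows "b_chromatic_number (web_vertices n) (web_adj n) = (if n \<le> 4 then 4 else 5)"
  unfolding b_chromatic_number_def
proof (rule Greatest_equality)
  consider "n = 3" | "n = 4" | "n = 5" | "6 \<le> n" using assms by linarith
  then show "\<exists>c. b_colouring (web_vertices n) (web_adj n) (if n \<le> 4 then 4 else 5) c"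
    by cases (use small_web_b_colourings web_colouring_b_colouring in \<open>simp; blast\<close>)+
next
  fix k assume "\<exists>c. b_colouring (web_vertices n) (web_adj n) k c"
  then obtain c where "b_colouring (web_vertices n) (web_adj n) k c" ..
  from web_b_colouring_bounds[OF this] show "k \<le> (if n \<le> 4 then 4 else 5)" by simp
qed

end
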